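(* For every $\mu>0$ and $\delta>0$, the function $\alpha\mapsto\sigma(\mu,\alpha,\delta)$ on $[0,+\infty)$ attains its maximum at a unique point $\alpha_m=\alpha_m(\mu,\delta)\ge 0$. Moreover $\alpha_m$ depends on $(\mu,\delta)$ only through $\beta=\mu\delta$, it is non-increasing as a function of $\beta$, and: (i) if $\mu\delta\ge 1/2$ then $\alpha_m=0$; (ii) $\alpha_m\to 1$ as $\mu\delta\to 0$. In particular $\alpha_m<1$ for all $\mu,\delta>0$.
   Context: For $\mu,\delta>0$ and $\alpha\ge 0$ define the steady state activity $a_\infty(\mu,\alpha,\delta):=\frac{1}{\delta+1/\mu}$ if $\alpha=0$, and for $\alpha>0$ \[a_\infty(\mu,\alpha,\delta):=\frac1\delta-\frac{1+\alpha+\mu\delta-\sqrt{\Delta(\mu,\alpha,\delta)}}{2\alpha\delta},\qquad \Delta(\mu,\alpha,\delta):=(1+\mu\delta-\alpha)^2+4\mu\alpha\delta\] (in all cases $a_\infty$ is the unique positive solution $a$ of $a\big(\delta+\frac1{\mu+\alpha a}\big)=1$; it is the stationary firing rate of the mean-field limit of age-dependent Hawkes processes with intensity $(\mu+x)\mathbf 1_{s\ge\delta}$, input $\mu$, refractory period $\delta$, mean connectivity $\alpha$). The stimulus sensitivity is $\sigma(\mu,\alpha,\delta):=\frac{\partial}{\partial\mu}a_\infty(\mu,\alpha,\delta)$; explicitly $\sigma=1/(1+\mu\delta)^2$ for $\alpha=0$ and $\sigma=-\frac1{2\alpha}+\frac{1+\mu\delta+\alpha}{2\alpha\sqrt{\Delta}}$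 for $\alpha>0$. The critical value of the connectivity is $\alpha_c=1$. *)

theory Defs
  imports "HOL-Analysis.Analysis"
begin

definition Delta :: "real \<Rightarrow> real \<Rightarrow> real \<Rightarrow> real" where
  "Delta \<mu> \<alpha> \<delta> = (1 + \<mu> * \<delta> - \<alpha>)^2 + 4 * \<mu> * \<alpha> * \<delta>"

definition a_inf :: "real \<Rightarrow> real \<Rightarrow> real \<Rightarrow> real" where
  "a_inf \<mu> \<alpha> \<delta> =
     (if \<alpha> = 0 then 1 / (\<delta> + 1 / \<mu>)
      else 1 / \<delta> - (1 + \<alpha> + \<mu> * \<delta> - sqrt (Delta \<mu> \<alpha> \<delta>)) / (2 * \<alpha> * \<delta>))"

definition sigma :: "real \<Rightarrow> real \<Rightarrow> real \<Rightarrow> real" where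
  "sigma \<mu> \<alpha> \<delta> = deriv (\<lambda>m. a_inf m \<alpha> \<delta>) \<mu>"

definition alpha_m :: "real \<Rightarrow> real \<Rightarrow> real" where
  "alpha_m \<mu> \<delta> = (THE am. am \<ge> 0 \<and> (\<forall>\<alpha>\<ge>0. sigma \<mu> \<alpha> \<delta> \<le> sigma \<mu> am \<delta>))"

end

theory Submission
  imports Defs
begin

text \<open>Write \<open>\<beta> = \<mu>\<delta>\<close> and \<open>x = \<delta> (\<mu> + \<alpha> a\<^sub>\<infinity>)\<close>. Then \<open>x\<close> depends only on \<open>\<beta>\<close> and \<open>\<alpha>\<close>,
  the map \<open>\<alpha> \<mapsto> x\<close> is an increasing bijection from \<open>[0, \<infinity>)\<close> onto \<open>[\<beta>, \<infinity>)\<close> with inverse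
  \<open>\<alpha> = (x - \<beta>)(x + 1)/x\<close>, and \<open>\<sigma> = x / ((x + 1)(x\<^sup>2 + \<beta>))\<close>. This rational function of \<open>x\<close>
  increases up to the positive root \<open>t\<close> of \<open>t\<^sup>2 (2t + 1) = \<beta>\<close> and decreases afterwards, so
  on \<open>[\<beta>, \<infinity>)\<close> it is maximal exactly at \<open>max \<beta> t\<close>. Since \<open>t \<le> \<beta>\<close> iff \<open>\<beta> \<ge> 1/2\<close>, this gives
  \<open>\<alpha>\<^sub>m = 0\<close> for \<open>\<beta> \<ge> 1/2\<close> and \<open>\<alpha>\<^sub>m = (1 - 2t)(1 + t)\<^sup>2 = 1 - 3t\<^sup>2 - 2t\<^sup>3\<close> otherwise; as \<open>t\<close>
  increases with \<open>\<beta>\<close> and tends to \<open>0\<close> with \<open>\<beta>\<close>, the remaining claims follow.\<close>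

text \<open>\<open>total_input (\<mu> * \<delta>) \<alpha> = \<delta> * (\<mu> + \<alpha> * a_inf \<mu> \<alpha> \<delta>)\<close>, the positive root of
  \<open>x\<^sup>2 + (1 - \<beta> - \<alpha>) x - \<beta> = 0\<close>.\<close>

definition total_input :: "real \<Rightarrow> real \<Rightarrow> real" where
  "total_input \<beta> \<alpha> = (\<alpha> + \<beta> - 1 + sqrt ((1 + \<beta> - \<alpha>)\<^sup>2 + 4 * \<beta> * \<alpha>)) / 2"

definition connectivity_of_input :: "real \<Rightarrow> real \<Rightarrow> real" where
  "connectivity_of_input \<beta> x = (x - \<beta>) * (x + 1) / x"

definition sensitivity_of_input :: "real \<Rightarrow> real \<Rightarrow> real" where
  "sensitivity_of_input \<beta> x = x / ((x + 1) * (x\<^sup>2 + \<beta>))"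

lemma total_input_pos:
  assumes "\<beta> > 0" "\<alpha> \<ge> 0"
  shows "total_input \<beta> \<alpha> > 0"
proof -
  have "(1 + \<beta> - \<alpha>)\<^sup>2 + 4 * \<beta> * \<alpha> = (\<alpha> + \<beta> - 1)\<^sup>2 + 4 * \<beta>"
    by (simp add: algebra_simps power2_eq_square)
  then have "sqrt ((1 + \<beta> - \<alpha>)\<^sup>2 + 4 * \<beta> * \<alpha>) > sqrt ((\<alpha> + \<beta> - 1)\<^sup>2)"
    using assms by (simp only:) (rule real_sqrt_less_mono, simp)
  then show ?thesis
    unfolding total_input_def by simp
qed

lemma total_input_quadratic:
  assumes "\<beta> \<ge> 0" "\<alpha> \<ge> 0"
  shows "\<alpha> * total_input \<beta> \<alpha> = (total_input \<beta> \<alpha> - \<beta>) * (total_input \<beta> \<alpha> + 1)"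
proof -
  define r where "r = sqrt ((1 + \<beta> - \<alpha>)\<^sup>2 + 4 * \<beta> * \<alpha>)"
  have "r\<^sup>2 = (1 + \<beta> - \<alpha>)\<^sup>2 + 4 * \<beta> * \<alpha>"
    unfolding r_def using assms by simp
  then show ?thesis
    unfolding total_input_def r_def[symmetric] by (simp add: field_simps power2_eq_square)
qed

lemma connectivity_of_input_strict_mono:
  assumes "\<beta> \<ge> 0"
  shows "strict_mono_on {0<..} (connectivity_of_input \<beta>)"
proof (rule strict_mono_onI)
  fix x y :: real
  assume "x \<in> {0<..}" "y \<in> {0<..}" "x < y"
  then have "\<beta> / y \<le> \<beta> / x"
    using assms by (simp add: divide_left_mono)
  moreover have "connectivity_of_input \<beta> z = z + 1 - \<beta> - \<beta> / z" if "z > 0" for z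
    using that unfolding connectivity_of_input_def by (simp add: field_simps)
  ultimately show "connectivity_of_input \<beta> x < connectivity_of_input \<beta> y"
    using \<open>x \<in> {0<..}\<close> \<open>y \<in> {0<..}\<close> \<open>x < y\<close> by simp
qed

lemma connectivity_of_total_input:
  assumes "\<beta> > 0" "\<alpha> \<ge> 0"
  shows "connectivity_of_input \<beta> (total_input \<beta> \<alpha>) = \<alpha>"
  using total_input_quadratic[of \<beta> \<alpha>] total_input_pos[OF assms] assms
  unfolding connectivity_of_input_def by (simp add: field_simps)

lemma total_input_ge:
  assumes "\<beta> > 0" "\<alpha> \<ge> 0"
  shows "\<beta> \<le> total_input \<beta> \<alpha>"
  using strict_mono_on_less_eq[OF connectivity_of_input_strict_mono, of \<beta> \<beta> "total_input \<beta> \<alpha>"]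
    connectivity_of_total_input[OF assms] total_input_pos[OF assms] assms
  by (simp add: connectivity_of_input_def)

lemma total_input_of_connectivity:
  assumes "\<beta> > 0" "\<beta> \<le> x"
  shows "total_input \<beta> (connectivity_of_input \<beta> x) = x"
proof -
  have mono: "strict_mono_on {0<..} (connectivity_of_input \<beta>)"
    using assms by (simp add: connectivity_of_input_strict_mono)
  have "connectivity_of_input \<beta> \<beta> \<le> connectivity_of_input \<beta> x"
    using strict_mono_on_leD[OF mono] assms by simp
  then have "connectivity_of_input \<beta> x \<ge> 0"
    by (simp add: connectivity_of_input_def)
  then show ?thesis
    using strict_mono_on_eqD[OF mono connectivity_of_total_input] total_input_pos assms by simp
qed

lemma sigma_closed_form:
  assumes "\<mu> > 0" "\<delta> > 0" "\<alpha> > 0"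
  shows "sigma \<mu> \<alpha> \<delta> = - 1 / (2 * \<alpha>) + (1 + \<mu> * \<delta> + \<alpha>) / (2 * \<alpha> * sqrt (Delta \<mu> \<alpha> \<delta>))"
proof -
  have Delta_pos: "Delta \<mu> \<alpha> \<delta> > 0"
    unfolding Delta_def using assms by (intro add_nonneg_pos) auto
  have "((\<lambda>m. Delta m \<alpha> \<delta>) has_real_derivative 2 * \<delta> * (1 + \<mu> * \<delta> + \<alpha>)) (at \<mu>)"
    unfolding Delta_def by (auto intro!: derivative_eq_intros simp: algebra_simps)
  then have "((\<lambda>m. a_inf m \<alpha> \<delta>) has_real_derivative
      - 1 / (2 * \<alpha>) + (1 + \<mu> * \<delta> + \<alpha>) / (2 * \<alpha> * sqrt (Delta \<mu> \<alpha> \<delta>))) (at \<mu>)"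
    unfolding a_inf_def using assms Delta_pos
    by (auto intro!: derivative_eq_intros simp: field_simps)
  then show ?thesis
    unfolding sigma_def by (rule DERIV_imp_deriv)
qed

lemma sensitivity_of_input_eq_root_form:
  assumes "\<beta> > 0" "x > \<beta>" "\<alpha> * x = (x - \<beta>) * (x + 1)"
  defines "r \<equiv> 2 * x + 1 - \<beta> - \<alpha>"
  shows "- 1 / (2 * \<alpha>) + (1 + \<beta> + \<alpha>) / (2 * \<alpha> * r) = sensitivity_of_input \<beta> x"
proof -
  have \<alpha>_eq: "\<alpha> = (x - \<beta>) * (x + 1) / x"
    using assms by (simp add: field_simps)
  have r_eq: "r = (x\<^sup>2 + \<beta>) / x" and num_eq: "\<beta> + \<alpha> - x = (x - \<beta>) / x"
    using assms by (auto simp: field_simps power2_eq_square)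
  have "x\<^sup>2 + \<beta> > 0"
    using assms by (intro add_nonneg_pos) auto
  then have r_pos: "r > 0"
    using assms unfolding r_eq by (intro divide_pos_pos) auto
  have "\<alpha> > 0"
    using assms unfolding \<alpha>_eq by (intro divide_pos_pos mult_pos_pos) auto
  have "- 1 / (2 * \<alpha>) + (1 + \<beta> + \<alpha>) / (2 * \<alpha> * r) = (1 + \<beta> + \<alpha> - r) / (2 * \<alpha> * r)"
    using r_pos \<open>\<alpha> > 0\<close> by (simp add: field_simps)
  also have "1 + \<beta> + \<alpha> - r = 2 * (\<beta> + \<alpha> - x)"
    by (simp add: r_def)
  also have "2 * (\<beta> + \<alpha> - x) / (2 * \<alpha> * r) = (\<beta> + \<alpha> - x) / (\<alpha> * r)"
    by (simp only: mult.assoc mult_divide_mult_cancel_left_if) simp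
  also have "\<dots> = ((x - \<beta>) / x) / ((x - \<beta>) * (x + 1) / x * ((x\<^sup>2 + \<beta>) / x))"
    unfolding r_eq num_eq by (subst \<alpha>_eq) (rule refl)
  also have "\<dots> = x / ((x + 1) * (x\<^sup>2 + \<beta>))"
  proof -
    have "a / x / (a * b / x * (c / x)) = x / (b * c)"
      if "a \<noteq> 0" "x \<noteq> 0" "b \<noteq> 0" "c \<noteq> 0" for a b c x :: real
      using that by (simp add: field_simps)
    then show ?thesis
      using \<open>x\<^sup>2 + \<beta> > 0\<close> assms by simp
  qed
  finally show ?thesis
    by (simp add: sensitivity_of_input_def)
qed

lemma sigma_eq_sensitivity_of_input_pos:
  assumes "\<mu> > 0" "\<delta> > 0" "\<alpha> > 0"
  shows "sigma \<mu> \<alpha> \<delta> = sensitivity_of_input (\<mu> * \<delta>) (total_input (\<mu> * \<delta>) \<alpha>)"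
proof -
  define \<beta> where "\<beta> = \<mu> * \<delta>"
  define x where "x = total_input \<beta> \<alpha>"
  have \<beta>: "\<beta> > 0"
    using assms by (simp add: \<beta>_def)
  have quad: "\<alpha> * x = (x - \<beta>) * (x + 1)"
    using total_input_quadratic[of \<beta> \<alpha>] \<beta> assms by (simp add: x_def)
  have "x \<noteq> \<beta>"
    using quad assms \<beta> by auto
  then have x: "x > \<beta>"
    using total_input_ge[OF \<beta> less_imp_le[OF assms(3)]] unfolding x_def[symmetric] by simp
  have "Delta \<mu> \<alpha> \<delta> = (1 + \<beta> - \<alpha>)\<^sup>2 + 4 * \<beta> * \<alpha>"
    by (simp add: Delta_def \<beta>_def algebra_simps)
  then have "sqrt (Delta \<mu> \<alpha> \<delta>) = 2 * x + 1 - \<beta> - \<alpha>"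
    by (simp add: x_def total_input_def field_simps)
  then show ?thesis
    using sigma_closed_form[OF assms] sensitivity_of_input_eq_root_form[OF \<beta> x quad]
    by (simp add: \<beta>_def x_def)
qed

lemma sigma_eq_sensitivity_of_input_zero:
  assumes "\<mu> > 0" "\<delta> > 0"
  shows "sigma \<mu> 0 \<delta> = sensitivity_of_input (\<mu> * \<delta>) (total_input (\<mu> * \<delta>) 0)"
proof -
  define \<beta> where "\<beta> = \<mu> * \<delta>"
  have \<beta>: "\<beta> > 0"
    using assms by (simp add: \<beta>_def)
  have "1 + \<delta> * \<mu> \<noteq> 0"
    using assms by (simp add: add_pos_pos[THEN less_imp_neq, symmetric])
  then have "((\<lambda>m. a_inf m 0 \<delta>) has_real_derivative 1 / (1 + \<beta>)\<^sup>2) (at \<mu>)"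
    unfolding a_inf_def \<beta>_def using assms
    by (auto intro!: derivative_eq_intros simp: field_simps power2_eq_square add_pos_pos)
  then have "sigma \<mu> 0 \<delta> = 1 / (1 + \<beta>)\<^sup>2"
    unfolding sigma_def by (rule DERIV_imp_deriv)
  also have "\<dots> = sensitivity_of_input \<beta> \<beta>"
  proof -
    have "(\<beta> + 1) * (\<beta>\<^sup>2 + \<beta>) = \<beta> * (1 + \<beta>)\<^sup>2"
      by (simp add: algebra_simps power2_eq_square)
    then show ?thesis
      using \<beta> by (simp add: sensitivity_of_input_def)
  qed
  also have "\<dots> = sensitivity_of_input \<beta> (total_input \<beta> 0)"
    using \<beta> by (simp add: total_input_def)
  finally show ?thesis
    by (simp add: \<beta>_def)
qed

lemma sigma_eq_sensitivity_of_input: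
  assumes "\<mu> > 0" "\<delta> > 0" "\<alpha> \<ge> 0"
  shows "sigma \<mu> \<alpha> \<delta> = sensitivity_of_input (\<mu> * \<delta>) (total_input (\<mu> * \<delta>) \<alpha>)"
  using assms sigma_eq_sensitivity_of_input_pos sigma_eq_sensitivity_of_input_zero by (cases "\<alpha> = 0") auto

text \<open>The critical point of \<open>sensitivity_of_input \<beta>\<close> on \<open>(0, \<infinity>)\<close> solves \<open>crit_level x = \<beta>\<close>.\<close>

definition crit_level :: "real \<Rightarrow> real" where
  "crit_level t = t\<^sup>2 * (2 * t + 1)"

definition crit_input :: "real \<Rightarrow> real" where
  "crit_input \<beta> = (THE t. t > 0 \<and> crit_level t = \<beta>)"

lemma crit_level_strict_mono: "strict_mono_on {0..} crit_level"
proof (rule strict_mono_onI)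
  fix s t :: real
  assume "s \<in> {0..}" "t \<in> {0..}" "s < t"
  then have "s\<^sup>2 < t\<^sup>2" "2 * s + 1 < 2 * t + 1" "0 \<le> s"
    by (auto intro: power_strict_mono)
  then show "crit_level s < crit_level t"
    unfolding crit_level_def by (intro mult_strict_mono) auto
qed

lemma crit_level_surj:
  assumes "\<beta> > 0"
  shows "\<exists>t > 0. crit_level t = \<beta>"
proof -
  have "\<beta> \<le> (\<beta> + 1)\<^sup>2"
    using assms by (simp add: power2_eq_square algebra_simps)
  also have "\<dots> \<le> crit_level (\<beta> + 1)"
    unfolding crit_level_def using assms by (simp add: mult_le_cancel_left1)
  finally have "crit_level 0 \<le> \<beta>" "\<beta> \<le> crit_level (\<beta> + 1)"
    using assms by (auto simp: crit_level_def)
  moreover have "\<forall>t. 0 \<le> t \<and> t \<le> \<beta> + 1 \<longrightarrow> isCont crit_level t"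
    unfolding crit_level_def by (auto intro!: continuous_intros)
  ultimately obtain t where "0 \<le> t" "crit_level t = \<beta>"
    using IVT[of crit_level 0 \<beta> "\<beta> + 1"] assms by auto
  moreover have "t \<noteq> 0"
    using \<open>crit_level t = \<beta>\<close> assms by (auto simp: crit_level_def)
  ultimately show ?thesis
    by (intro exI[of _ t]) auto
qed

lemma crit_input:
  assumes "\<beta> > 0"
  shows "crit_input \<beta> > 0" and "crit_level (crit_input \<beta>) = \<beta>"
proof -
  have "\<exists>!t. t > 0 \<and> crit_level t = \<beta>"
    using crit_level_surj[OF assms] strict_mono_on_eqD[OF crit_level_strict_mono]
    by (metis atLeast_iff less_imp_le)
  then have "crit_input \<beta> > 0 \<and> crit_level (crit_input \<beta>) = \<beta>"
    unfolding crit_input_def by (rule theI')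
  then show "crit_input \<beta> > 0" and "crit_level (crit_input \<beta>) = \<beta>"
    by auto
qed

lemma crit_input_mono:
  assumes "0 < \<beta>\<^sub>1" "\<beta>\<^sub>1 \<le> \<beta>\<^sub>2"
  shows "crit_input \<beta>\<^sub>1 \<le> crit_input \<beta>\<^sub>2"
  using strict_mono_on_less_eq[OF crit_level_strict_mono, of "crit_input \<beta>\<^sub>1" "crit_input \<beta>\<^sub>2"]
    crit_input[of \<beta>\<^sub>1] crit_input[of \<beta>\<^sub>2] assms
  by simp

lemma crit_input_le_iff:
  assumes "\<beta> > 0"
  shows "crit_input \<beta> \<le> \<beta> \<longleftrightarrow> 1/2 \<le> \<beta>"
proof -
  have "crit_input \<beta> \<le> \<beta> \<longleftrightarrow> \<beta> \<le> crit_level \<beta>"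
    using strict_mono_on_less_eq[OF crit_level_strict_mono, of "crit_input \<beta>" \<beta>]
      crit_input[OF assms] assms by simp
  also have "crit_level \<beta> - \<beta> = \<beta> * (\<beta> + 1) * (2 * \<beta> - 1)"
    by (simp add: crit_level_def algebra_simps power2_eq_square)
  then have "\<beta> \<le> crit_level \<beta> \<longleftrightarrow> 0 \<le> \<beta> * (\<beta> + 1) * (2 * \<beta> - 1)"
    by linarith
  also have "\<dots> \<longleftrightarrow> 1/2 \<le> \<beta>"
  proof -
    have "\<beta> * (\<beta> + 1) > 0"
      using assms by simp
    then show ?thesis
      by (auto simp: zero_le_mult_iff)
  qed
  finally show ?thesis .
qed

lemma crit_input_tendsto_zero: "(crit_input \<longlongrightarrow> 0) (at_right 0)"
proof (rule tendsto_sandwich)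
  have "crit_input \<beta> \<le> sqrt \<beta>" if "\<beta> > 0" for \<beta>
  proof -
    have "(crit_input \<beta>)\<^sup>2 \<le> crit_level (crit_input \<beta>)"
      using crit_input(1)[OF that] by (simp add: crit_level_def)
    then show ?thesis
      using crit_input[OF that] by (simp add: real_le_rsqrt)
  qed
  then show "eventually (\<lambda>\<beta>. crit_input \<beta> \<le> sqrt \<beta>) (at_right 0)"
    by (simp add: eventually_at_right_less eventually_mono[OF eventually_at_right_less])
  show "eventually (\<lambda>\<beta>. 0 \<le> crit_input \<beta>) (at_right 0)"
    using crit_input(1) by (simp add: less_imp_le eventually_mono[OF eventually_at_right_less])
  show "((\<lambda>_. 0) \<longlongrightarrow> (0::real)) (at_right 0)"
    by simp
  show "(sqrt \<longlongrightarrow> 0) (at_right 0)"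
    using tendsto_real_sqrt[OF tendsto_ident_at[of "0::real" "{0<..}"]] by simp
qed

lemma sensitivity_of_input_diff:
  assumes "x > 0" "y > 0" "\<beta> \<ge> 0"
  shows "sensitivity_of_input \<beta> y - sensitivity_of_input \<beta> x =
    (y - x) * (\<beta> - x * y * (x + y + 1)) / ((x + 1) * (x\<^sup>2 + \<beta>) * ((y + 1) * (y\<^sup>2 + \<beta>)))"
proof -
  define P where "P = (x + 1) * (x\<^sup>2 + \<beta>)"
  define Q where "Q = (y + 1) * (y\<^sup>2 + \<beta>)"
  have "P > 0" "Q > 0"
    unfolding P_def Q_def using assms by (auto intro!: mult_pos_pos add_pos_nonneg)
  then have "sensitivity_of_input \<beta> y - sensitivity_of_input \<beta> x = (y * P - x * Q) / (P * Q)"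
    unfolding sensitivity_of_input_def P_def[symmetric] Q_def[symmetric] by (simp add: field_simps)
  also have "y * P - x * Q = (y - x) * (\<beta> - x * y * (x + y + 1))"
    unfolding P_def Q_def by (simp add: algebra_simps power2_eq_square)
  finally show ?thesis
    by (simp add: P_def Q_def)
qed

lemma sensitivity_of_input_less:
  assumes "x > 0" "y > 0" "\<beta> \<ge> 0" "(y - x) * (\<beta> - x * y * (x + y + 1)) > 0"
  shows "sensitivity_of_input \<beta> x < sensitivity_of_input \<beta> y"
proof -
  have "(x + 1) * (x\<^sup>2 + \<beta>) * ((y + 1) * (y\<^sup>2 + \<beta>)) > 0"
    using assms by (auto intro!: mult_pos_pos add_pos_nonneg)
  then have "(y - x) * (\<beta> - x * y * (x + y + 1)) / ((x + 1) * (x\<^sup>2 + \<beta>) * ((y + 1) * (y\<^sup>2 + \<beta>))) > 0"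
    using assms(4) by (rule divide_pos_pos[rotated])
  then show ?thesis
    using sensitivity_of_input_diff[OF assms(1-3)] by linarith
qed

lemma mult_mult_add_strict_mono:
  fixes a b c d :: real
  assumes "0 < a" "a \<le> c" "0 < b" "b < d"
  shows "a * b * (a + b + 1) < c * d * (c + d + 1)"
proof -
  have "a * b < c * d"
    using assms by (intro mult_le_less_imp_less) auto
  moreover have "a + b + 1 < c + d + 1"
    using assms by simp
  moreover have "0 < c * d" "0 \<le> a + b + 1"
    using assms by auto
  ultimately show ?thesis
    by (rule mult_strict_mono)
qed

lemma crit_level_eq_mult: "crit_level t = t * t * (t + t + 1)"
  by (simp add: crit_level_def power2_eq_square algebra_simps)

lemma sensitivity_of_input_strict_mono_below:
  assumes "\<beta> > 0" "0 < x" "x < y" "y \<le> crit_input \<beta>"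
  shows "sensitivity_of_input \<beta> x < sensitivity_of_input \<beta> y"
proof (rule sensitivity_of_input_less)
  have "y * x * (y + x + 1) < crit_input \<beta> * crit_input \<beta> * (crit_input \<beta> + crit_input \<beta> + 1)"
    using assms by (intro mult_mult_add_strict_mono) auto
  then have "x * y * (x + y + 1) < \<beta>"
    using crit_input(2)[OF assms(1)] by (simp add: crit_level_eq_mult algebra_simps)
  then show "(y - x) * (\<beta> - x * y * (x + y + 1)) > 0"
    using assms by simp
qed (use assms in auto)

lemma sensitivity_of_input_strict_anti_above:
  assumes "\<beta> > 0" "crit_input \<beta> \<le> x" "x < y"
  shows "sensitivity_of_input \<beta> y < sensitivity_of_input \<beta> x"
proof (rule sensitivity_of_input_less)
  have t: "crit_input \<beta> > 0"
    using crit_input(1)[OF assms(1)] .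
  have "crit_input \<beta> * crit_input \<beta> * (crit_input \<beta> + crit_input \<beta> + 1) < x * y * (x + y + 1)"
    using assms t by (intro mult_mult_add_strict_mono) auto
  then have "\<beta> - y * x * (y + x + 1) < 0"
    using crit_input(2)[OF assms(1)] by (simp add: crit_level_eq_mult algebra_simps)
  then show "(x - y) * (\<beta> - y * x * (y + x + 1)) > 0"
    using assms by (simp add: mult_neg_neg)
qed (use assms crit_input(1)[OF assms(1)] in auto)

definition optimal_input :: "real \<Rightarrow> real" where
  "optimal_input \<beta> = max \<beta> (crit_input \<beta>)"

lemma sensitivity_of_input_max:
  assumes "\<beta> > 0" "\<beta> \<le> x" "x \<noteq> optimal_input \<beta>"
  shows "sensitivity_of_input \<beta> x < sensitivity_of_input \<beta> (optimal_input \<beta>)"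
proof (cases "crit_input \<beta> \<le> \<beta>")
  case True
  then show ?thesis
    using assms sensitivity_of_input_strict_anti_above[of \<beta> \<beta> x] by (simp add: optimal_input_def)
next
  case False
  then have opt: "optimal_input \<beta> = crit_input \<beta>"
    by (simp add: optimal_input_def)
  show ?thesis
  proof (cases "x < crit_input \<beta>")
    case True
    then show ?thesis
      using assms opt sensitivity_of_input_strict_mono_below[of \<beta> x] by simp
  next
    case False
    then show ?thesis
      using assms opt sensitivity_of_input_strict_anti_above[of \<beta> "crit_input \<beta>" x] by simp
  qed
qed

definition alpha_opt :: "real \<Rightarrow> real" where
  "alpha_opt \<beta> = connectivity_of_input \<beta> (optimal_input \<beta>)"

lemma alpha_opt_nonneg:
  assumes "\<beta> > 0"
  shows "alpha_opt \<beta> \<ge> 0"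
  using assms unfolding alpha_opt_def optimal_input_def connectivity_of_input_def
  by (auto intro!: divide_nonneg_pos mult_nonneg_nonneg)

lemma sigma_maximiser_iff:
  assumes "\<mu> > 0" "\<delta> > 0" "am \<ge> 0"
  shows "(\<forall>\<alpha>\<ge>0. sigma \<mu> \<alpha> \<delta> \<le> sigma \<mu> am \<delta>) \<longleftrightarrow> am = alpha_opt (\<mu> * \<delta>)"
proof -
  define \<beta> where "\<beta> = \<mu> * \<delta>"
  have \<beta>: "\<beta> > 0"
    using assms by (simp add: \<beta>_def)
  have sigma: "sigma \<mu> \<alpha> \<delta> = sensitivity_of_input \<beta> (total_input \<beta> \<alpha>)" if "\<alpha> \<ge> 0" for \<alpha>
    using sigma_eq_sensitivity_of_input[OF assms(1,2) that] by (simp add: \<beta>_def)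
  have opt: "total_input \<beta> (alpha_opt \<beta>) = optimal_input \<beta>"
    unfolding alpha_opt_def using \<beta> by (simp add: total_input_of_connectivity optimal_input_def)
  have le_opt: "sigma \<mu> \<alpha> \<delta> \<le> sensitivity_of_input \<beta> (optimal_input \<beta>)" if "\<alpha> \<ge> 0" for \<alpha>
    using sensitivity_of_input_max[OF \<beta> total_input_ge[OF \<beta> that]] sigma[OF that]
    by (cases "total_input \<beta> \<alpha> = optimal_input \<beta>") auto
  show ?thesis
  proof
    assume "\<forall>\<alpha>\<ge>0. sigma \<mu> \<alpha> \<delta> \<le> sigma \<mu> am \<delta>"
    then have "sigma \<mu> (alpha_opt \<beta>) \<delta> \<le> sigma \<mu> am \<delta>"
      using alpha_opt_nonneg[OF \<beta>] by blast
    then have "sensitivity_of_input \<beta> (optimal_input \<beta>) \<le> sensitivity_of_input \<beta> (total_input \<beta> am)"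
      using sigma[OF alpha_opt_nonneg[OF \<beta>]] sigma[OF assms(3)] opt by simp
    then have "total_input \<beta> am = optimal_input \<beta>"
      using sensitivity_of_input_max[OF \<beta> total_input_ge[OF \<beta> assms(3)]] by fastforce
    then show "am = alpha_opt (\<mu> * \<delta>)"
      using connectivity_of_total_input[OF \<beta> assms(3)] by (simp add: alpha_opt_def \<beta>_def)
  next
    assume "am = alpha_opt (\<mu> * \<delta>)"
    then show "\<forall>\<alpha>\<ge>0. sigma \<mu> \<alpha> \<delta> \<le> sigma \<mu> am \<delta>"
      using le_opt sigma[OF assms(3)] opt by (simp add: \<beta>_def)
  qed
qed

lemma alpha_m_eq_alpha_opt:
  assumes "\<mu> > 0" "\<delta> > 0"
  shows "alpha_m \<mu> \<delta> = alpha_opt (\<mu> * \<delta>)"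
  unfolding alpha_m_def
  using sigma_maximiser_iff[OF assms] alpha_opt_nonneg[of "\<mu> * \<delta>"] assms
  by (intro the_equality) auto

lemma alpha_opt_eq_zero:
  assumes "1/2 \<le> \<beta>"
  shows "alpha_opt \<beta> = 0"
  using assms crit_input_le_iff[of \<beta>]
  by (simp add: alpha_opt_def optimal_input_def connectivity_of_input_def)

lemma alpha_opt_eq_crit_input:
  assumes "0 < \<beta>" "\<beta> < 1/2"
  shows "alpha_opt \<beta> = 1 - 3 * (crit_input \<beta>)\<^sup>2 - 2 * (crit_input \<beta>)^3"
proof -
  define t where "t = crit_input \<beta>"
  have t: "t > 0" "\<beta> = t\<^sup>2 * (2 * t + 1)"
    using crit_input[OF assms(1)] by (auto simp: t_def crit_level_def)
  have "optimal_input \<beta> = t"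
    using crit_input_le_iff[OF assms(1)] assms by (simp add: optimal_input_def t_def)
  then have "alpha_opt \<beta> = (t - t\<^sup>2 * (2 * t + 1)) * (t + 1) / t"
    by (simp add: alpha_opt_def connectivity_of_input_def t)
  also have "\<dots> = 1 - 3 * t\<^sup>2 - 2 * t^3"
    using t by (simp add: field_simps power2_eq_square power3_eq_cube)
  finally show ?thesis
    by (simp add: t_def)
qed

lemma alpha_opt_antimono:
  assumes "0 < \<beta>\<^sub>1" "\<beta>\<^sub>1 \<le> \<beta>\<^sub>2"
  shows "alpha_opt \<beta>\<^sub>2 \<le> alpha_opt \<beta>\<^sub>1"
proof (cases "1/2 \<le> \<beta>\<^sub>2")
  case True
  then show ?thesis
    using alpha_opt_eq_zero alpha_opt_nonneg assms by simp
next
  case False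
  have "crit_input \<beta>\<^sub>1 \<le> crit_input \<beta>\<^sub>2" "0 \<le> crit_input \<beta>\<^sub>1"
    using crit_input_mono crit_input(1) assms by (auto intro: less_imp_le)
  then have "(crit_input \<beta>\<^sub>1)\<^sup>2 \<le> (crit_input \<beta>\<^sub>2)\<^sup>2" "(crit_input \<beta>\<^sub>1)^3 \<le> (crit_input \<beta>\<^sub>2)^3"
    by (auto intro: power_mono)
  then show ?thesis
    using False assms by (simp add: alpha_opt_eq_crit_input)
qed

lemma alpha_opt_less_one:
  assumes "\<beta> > 0"
  shows "alpha_opt \<beta> < 1"
proof (cases "1/2 \<le> \<beta>")
  case False
  have "(crit_input \<beta>)\<^sup>2 > 0" "(crit_input \<beta>)^3 > 0"
    using crit_input(1)[OF assms] by auto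
  moreover have "\<beta> < 1/2"
    using False by simp
  ultimately show ?thesis
    using alpha_opt_eq_crit_input[OF assms] by linarith
qed (simp add: alpha_opt_eq_zero)

lemma alpha_opt_tendsto_one: "(alpha_opt \<longlongrightarrow> 1) (at_right 0)"
proof -
  have "((\<lambda>\<beta>. 1 - 3 * (crit_input \<beta>)\<^sup>2 - 2 * (crit_input \<beta>)^3) \<longlongrightarrow> 1 - 3 * 0\<^sup>2 - 2 * 0^3) (at_right 0)"
    by (intro tendsto_intros crit_input_tendsto_zero)
  moreover have "eventually (\<lambda>\<beta>. 1 - 3 * (crit_input \<beta>)\<^sup>2 - 2 * (crit_input \<beta>)^3 = alpha_opt \<beta>) (at_right 0)"
    unfolding eventually_at_right_field by (intro exI[of _ "1/2"]) (simp add: alpha_opt_eq_crit_input)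
  ultimately show ?thesis
    by (simp add: tendsto_cong)
qed

theorem theorem1:
  shows "(\<forall>\<mu> \<delta>. \<mu> > 0 \<longrightarrow> \<delta> > 0 \<longrightarrow>
            (\<exists>!am. am \<ge> 0 \<and> (\<forall>\<alpha>\<ge>0. sigma \<mu> \<alpha> \<delta> \<le> sigma \<mu> am \<delta>)))
    \<and> (\<exists>g :: real \<Rightarrow> real.
          (\<forall>\<mu> \<delta>. \<mu> > 0 \<longrightarrow> \<delta> > 0 \<longrightarrow> alpha_m \<mu> \<delta> = g (\<mu> * \<delta>))
        \<and> (\<forall>\<beta>1 \<beta>2. 0 < \<beta>1 \<longrightarrow> \<beta>1 \<le> \<beta>2 \<longrightarrow> g \<beta>2 \<le> g \<beta>1)
        \<and> (g \<longlongrightarrow> 1) (at_right 0))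
    \<and> (\<forall>\<mu> \<delta>. \<mu> > 0 \<longrightarrow> \<delta> > 0 \<longrightarrow> \<mu> * \<delta> \<ge> 1/2 \<longrightarrow> alpha_m \<mu> \<delta> = 0)
    \<and> (\<forall>\<mu> \<delta>. \<mu> > 0 \<longrightarrow> \<delta> > 0 \<longrightarrow> alpha_m \<mu> \<delta> < 1)"
proof (intro conjI allI impI)
  fix \<mu> \<delta> :: real
  assume "\<mu> > 0" "\<delta> > 0"
  then show "\<exists>!am. am \<ge> 0 \<and> (\<forall>\<alpha>\<ge>0. sigma \<mu> \<alpha> \<delta> \<le> sigma \<mu> am \<delta>)"
    using sigma_maximiser_iff alpha_opt_nonneg[of "\<mu> * \<delta>"]
    by (intro ex1I[of _ "alpha_opt (\<mu> * \<delta>)"]) auto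
next
  show "\<exists>g :: real \<Rightarrow> real.
          (\<forall>\<mu> \<delta>. \<mu> > 0 \<longrightarrow> \<delta> > 0 \<longrightarrow> alpha_m \<mu> \<delta> = g (\<mu> * \<delta>))
        \<and> (\<forall>\<beta>1 \<beta>2. 0 < \<beta>1 \<longrightarrow> \<beta>1 \<le> \<beta>2 \<longrightarrow> g \<beta>2 \<le> g \<beta>1)
        \<and> (g \<longlongrightarrow> 1) (at_right 0)"
    using alpha_m_eq_alpha_opt alpha_opt_antimono alpha_opt_tendsto_one by blast
next
  fix \<mu> \<delta> :: real
  assume "\<mu> > 0" "\<delta> > 0"
  then show "\<mu> * \<delta> \<ge> 1/2 \<Longrightarrow> alpha_m \<mu> \<delta> = 0" and "alpha_m \<mu> \<delta> < 1"
    by (simp_all add: alpha_m_eq_alpha_opt alpha_opt_eq_zero alpha_opt_less_one)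
qed

end
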